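(* Let $z_1,\dots,z_n$ be distinct points of the unit circle and $\xi_1,\dots,\xi_m$ distinct points of $\mathbb{C}\setminus\{0\}$, distinct from the $z_j$. The following are equivalent: (1) the set $\{\xi_1,\dots,\xi_m\}$ is invariant under $\xi\mapsto1/\bar\xi$, and $\boldsymbol z,\boldsymbol\xi$ satisfy the stationary relations $$-\sum_{j=1}^n\frac{2}{\xi_k-z_j}+\sum_{l\neq k}\frac{4}{\xi_k-\xi_l}+\frac{n-2m+2}{\xi_k}=0,\qquad k=1,\dots,m;$$ (2) there exists a quadratic differential $Q(z)dz^2\in\mathcal{QD}_{m,n}(\boldsymbol z)$ whose poles (other than $0,\infty$) are $\xi_1,\dots,\xi_m$ and whose zeros (other than $0,\infty$) are $z_1,\dots,z_n$.
   Context: $\mathcal{QD}_{m,n}(\boldsymbol z)$ denotes the set of meromorphic quadratic differentials $Q(z)dz^2$ on the Riemann sphere such that: (1) $Q$ is involution symmetric, $\overline{Q(z^* )}\,\overline{(dz^* )^2}=Q(z)dz^2$ with $z^*=1/\bar z$, i.e. $Q(z)=z^{-4}\,\overline{Q(1/\bar z)}$; (2) $z_1,\dots,z_n$ are zeros of order exactly $2$; (3) $\xi_1,\dots,\xi_m$ are distinct finite nonzero poles of order $4$ at which the residue of $\sqrt{Q(z)}\,dz$ vanishes (this residue is well defined up to sign since the pole has even order); (4) $Q$ has a pole of order $n+2-2m$ at $0$ and at $\infty$ (a negative order meaning a zero of the opposite order); and $Q$ has no other zeros or poles. *)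

theory Defs
  imports "HOL-Complex_Analysis.Complex_Analysis"
begin

text \<open>Residue of a (local branch of) sqrt(Q) dz at a point p vanishes: some holomorphic
  square root of Q on a punctured disc around p has residue 0 at p
  (the two branches differ by a sign, so this is independent of the branch).\<close>
definition sqrt_residue_vanishes :: "(complex \<Rightarrow> complex) \<Rightarrow> complex \<Rightarrow> bool" where
  "sqrt_residue_vanishes Q p \<longleftrightarrow>
     (\<exists>f r. r > 0 \<and> f holomorphic_on (ball p r - {p}) \<and>
            (\<forall>w \<in> ball p r - {p}. (f w)^2 = Q w) \<and> residue f p = 0)"

text \<open>Q(z) dz^2 in the chart w = 1/z at infinity: Q(1/w) w^(-4) dw^2.\<close>
definition at_infinity_chart :: "(complex \<Rightarrow> complex) \<Rightarrow> complex \<Rightarrow> complex" where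
  "at_infinity_chart Q w = Q (1 / w) / w ^ 4"

definition QD_with :: "nat \<Rightarrow> nat \<Rightarrow> (nat \<Rightarrow> complex) \<Rightarrow> (nat \<Rightarrow> complex)
                        \<Rightarrow> (complex \<Rightarrow> complex) \<Rightarrow> bool" where
  "QD_with m n z xi Q \<longleftrightarrow>
     Q meromorphic_on UNIV \<and>
     at_infinity_chart Q meromorphic_on {0} \<and>
     \<not> (\<forall>\<^sub>F w in cosparse UNIV. Q w = 0) \<and>
     (\<forall>\<^sub>F w in cosparse UNIV. Q w = cnj (Q (1 / cnj w)) / w ^ 4) \<and>
     (\<forall>j<n. zorder Q (z j) = 2) \<and>
     (\<forall>k<m. xi k \<noteq> 0 \<and> zorder Q (xi k) = -4 \<and> sqrt_residue_vanishes Q (xi k)) \<and>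
     zorder Q 0 = - (int n + 2 - 2 * int m) \<and>
     zorder (at_infinity_chart Q) 0 = - (int n + 2 - 2 * int m) \<and>
     (\<forall>w. w \<noteq> 0 \<and> w \<notin> z ` {..<n} \<and> w \<notin> xi ` {..<m} \<longrightarrow> zorder Q w = 0)"

definition QD :: "nat \<Rightarrow> nat \<Rightarrow> (nat \<Rightarrow> complex) \<Rightarrow> (complex \<Rightarrow> complex) set" where
  "QD m n z = {Q. \<exists>xi. inj_on xi {..<m} \<and> QD_with m n z xi Q}"

end

(*
  Every differential in QD_{m,n}(z) has the same zeros and poles on the Riemann sphere as the
  rational function Q_model(w) = w^(2m-n-2) prod_j (w - z_j)^2 prod_k (w - xi_k)^(-4), so the
  quotient has neither zeros nor poles on the sphere and is a nonzero constant by Liouville.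

  Near a pole xi_k write Q = h / (w - xi_k)^4 with h holomorphic and nonvanishing, and let s be a
  holomorphic square root of h. The branches of sqrt Q are +-s / (w - xi_k)^2, with residue
  +-s'(xi_k), and h' = 2 s s'. Hence the residue vanishes iff h'(xi_k) = 0, i.e. iff the
  logarithmic derivative of h at xi_k vanishes; for Q = c Q_model that logarithmic derivative is
  minus the left-hand side of the k-th stationary relation.

  The symmetry Q(z) = z^(-4) cnj (Q (1 / cnj z)) maps poles to poles, so the xi_k are invariant
  under reflection in the unit circle. Conversely, for an invariant configuration the reflected
  function cnj (Q_model (1 / cnj z)) / z^4 equals K Q_model with |K| = 1; writing K = c / cnj c
  makes c Q_model symmetric.
*)
theory Submission
  imports Defs
begin

section \<open>Rational functions with prescribed divisor\<close>

lemma power_int_sum: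
  fixes x :: "'a::field"
  assumes "x \<noteq> 0"
  shows "x powi (\<Sum>p\<in>S. f p) = (\<Prod>p\<in>S. x powi f p)"
proof (cases "finite S")
  case True
  then show ?thesis by (induction S rule: finite_induct) (use assms in \<open>auto simp: power_int_add\<close>)
qed simp

definition divisor_fun :: "complex set \<Rightarrow> (complex \<Rightarrow> int) \<Rightarrow> complex \<Rightarrow> complex" where
  "divisor_fun S ord w = (\<Prod>p\<in>S. (w - p) powi ord p)"

lemma divisor_fun_nonzero: "finite S \<Longrightarrow> w \<notin> S \<Longrightarrow> divisor_fun S ord w \<noteq> 0"
  unfolding divisor_fun_def by (auto simp: power_int_not_zero)

lemma divisor_fun_holomorphic: "finite S \<Longrightarrow> A \<inter> S = {} \<Longrightarrow> divisor_fun S ord holomorphic_on A"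
  unfolding divisor_fun_def by (intro holomorphic_intros) auto

lemma divisor_fun_meromorphic: "divisor_fun S ord meromorphic_on A"
  unfolding divisor_fun_def by (intro meromorphic_intros)

lemma divisor_fun_remove:
  "finite S \<Longrightarrow> p \<in> S \<Longrightarrow> divisor_fun S ord w = divisor_fun (S - {p}) ord w * (w - p) powi ord p"
  unfolding divisor_fun_def by (simp add: prod.remove mult.commute)

lemma zorder_divisor_fun:
  assumes "finite S"
  shows "zorder (divisor_fun S ord) p = (if p \<in> S then ord p else 0)"
proof (rule zorder_eqI)
  show "open (- (S - {p}))" using assms by (intro open_Compl finite_imp_closed) auto
  show "divisor_fun (S - {p}) ord holomorphic_on - (S - {p})"
    using assms by (intro divisor_fun_holomorphic) auto
  show "divisor_fun (S - {p}) ord p \<noteq> 0" using assms by (intro divisor_fun_nonzero) auto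
  fix w assume "w \<in> - (S - {p})" "w \<noteq> p"
  show "divisor_fun S ord w
          = divisor_fun (S - {p}) ord w * (w - p) powi (if p \<in> S then ord p else 0)"
    using assms by (cases "p \<in> S") (auto simp: divisor_fun_remove)
qed auto

lemma divisor_fun_has_field_derivative:
  assumes "finite S" "w \<notin> S"
  shows "(divisor_fun S ord has_field_derivative
            divisor_fun S ord w * (\<Sum>q\<in>S. of_int (ord q) / (w - q))) (at w)"
  using assms
proof (induction S rule: finite_induct)
  case empty
  then show ?case by (simp add: divisor_fun_def)
next
  case (insert a S)
  have wa: "w - a \<noteq> 0" using insert by auto
  have "divisor_fun (insert a S) ord = (\<lambda>w. (w - a) powi ord a * divisor_fun S ord w)"
    using insert by (auto simp: divisor_fun_def)
  moreover have "((\<lambda>w. (w - a) powi ord a * divisor_fun S ord w) has_field_derivative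
      of_int (ord a) * (w - a) powi (ord a - 1) * divisor_fun S ord w
      + (w - a) powi ord a * (divisor_fun S ord w * (\<Sum>q\<in>S. of_int (ord q) / (w - q)))) (at w)"
    using insert wa by (auto intro!: derivative_eq_intros)
  ultimately show ?case
    using insert wa by (simp add: power_int_diff field_simps sum_distrib_left)
qed

lemma at_infinity_chart_divisor_fun:
  assumes "finite S" "w \<noteq> 0"
  shows "at_infinity_chart (divisor_fun S ord) w
           = (\<Prod>p\<in>S. (1 - p * w) powi ord p) * w powi (- (\<Sum>p\<in>S. ord p) - 4)"
proof -
  have "divisor_fun S ord (1 / w) = (\<Prod>p\<in>S. (1 - p * w) powi ord p * (1 / w) powi ord p)"
    unfolding divisor_fun_def
  proof (rule prod.cong)
    fix p
    have "1 / w - p = (1 - p * w) * (1 / w)" using assms by (simp add: field_simps)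
    then show "(1 / w - p) powi ord p = (1 - p * w) powi ord p * (1 / w) powi ord p"
      by (simp only: power_int_mult_distrib)
  qed auto
  also have "\<dots> = (\<Prod>p\<in>S. (1 - p * w) powi ord p) * w powi (- (\<Sum>p\<in>S. ord p))"
    using assms
    by (simp add: prod.distrib prod_dividef power_int_sum power_int_minus_divide power_int_one_over)
  finally show ?thesis
    using assms by (simp add: at_infinity_chart_def power_int_diff)
qed

lemma zorder_at_infinity_chart_divisor_fun:
  assumes "finite S"
  shows "zorder (at_infinity_chart (divisor_fun S ord)) 0 = - (\<Sum>p\<in>S. ord p) - 4"
proof (rule zorder_eqI)
  define U where "U = {w. (\<Prod>p\<in>S. 1 - p * w) \<noteq> 0}"
  show "open U" unfolding U_def by (intro open_Collect_neq continuous_intros)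
  show "0 \<in> U" by (simp add: U_def)
  show "(\<lambda>w. \<Prod>p\<in>S. (1 - p * w) powi ord p) holomorphic_on U"
    using assms by (intro holomorphic_intros) (auto simp: U_def)
  show "(\<Prod>p\<in>S. (1 - p * 0) powi ord p) \<noteq> 0" by simp
  show "at_infinity_chart (divisor_fun S ord) w
          = (\<Prod>p\<in>S. (1 - p * w) powi ord p) * (w - 0) powi (- (\<Sum>p\<in>S. ord p) - 4)" if "w \<noteq> 0" for w
    using at_infinity_chart_divisor_fun[OF assms that] by simp
qed

lemma at_infinity_chart_divisor_fun_meromorphic:
  "at_infinity_chart (divisor_fun S ord) meromorphic_on A"
  unfolding at_infinity_chart_def divisor_fun_def by (intro meromorphic_intros)

lemma divisor_fun_reflection:
  assumes fin: "finite S" and "0 \<in> S" and refl: "\<And>p. p \<in> S \<Longrightarrow> 1 / cnj p \<in> S"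
    and ord_refl: "\<And>p. p \<in> S \<Longrightarrow> ord (1 / cnj p) = ord p"
    and deg: "ord 0 = - (\<Sum>p\<in>S. ord p) - 4"
  obtains K
    where "\<And>w. w \<notin> S \<Longrightarrow> cnj (divisor_fun S ord (1 / cnj w)) = K * divisor_fun S ord w * w ^ 4"
proof
  define K where "K = (\<Prod>q\<in>S - {0}. (- 1 / q) powi ord q)"
  fix w assume "w \<notin> S"
  then have "w \<noteq> 0" using \<open>0 \<in> S\<close> by auto
  have "cnj (divisor_fun S ord (1 / cnj w)) = (\<Prod>p\<in>S. (1 / w - cnj p) powi ord p)"
    by (simp add: divisor_fun_def)
  \<comment> \<open>reindex along the involution \<open>p \<mapsto> 1 / cnj p\<close> of S, which fixes 0 since 1 / 0 = 0\<close>
  also have "\<dots> = (\<Prod>q\<in>S. (1 / w - 1 / q) powi ord q)"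
    by (rule prod.reindex_bij_witness[of S "\<lambda>q. 1 / cnj q" "\<lambda>q. 1 / cnj q"])
      (auto simp: refl ord_refl)
  also have "\<dots> = (1 / w) powi ord 0 * (\<Prod>q\<in>S - {0}. (1 / w - 1 / q) powi ord q)"
    using fin \<open>0 \<in> S\<close> by (simp add: prod.remove)
  also have "(\<Prod>q\<in>S - {0}. (1 / w - 1 / q) powi ord q)
      = (\<Prod>q\<in>S - {0}. (w - q) powi ord q * (- 1 / q) powi ord q * (1 / w) powi ord q)"
  proof (rule prod.cong)
    fix q assume "q \<in> S - {0}"
    then have "1 / w - 1 / q = (w - q) * (- 1 / q) * (1 / w)"
      using \<open>w \<noteq> 0\<close> by (auto simp: field_simps)
    then show "(1 / w - 1 / q) powi ord q
                 = (w - q) powi ord q * (- 1 / q) powi ord q * (1 / w) powi ord q"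
      by (simp only: power_int_mult_distrib)
  qed simp
  also have "\<dots> = divisor_fun (S - {0}) ord w * K * (1 / w) powi (\<Sum>q\<in>S - {0}. ord q)"
    using \<open>w \<noteq> 0\<close> by (simp add: prod.distrib power_int_sum divisor_fun_def K_def)
  also have "(1 / w) powi ord 0 * \<dots> = K * (divisor_fun (S - {0}) ord w * w powi ord 0) * w ^ 4"
  proof -
    have "(1 / w) powi ord 0 * (1 / w) powi (\<Sum>q\<in>S - {0}. ord q) = (1 / w) powi (\<Sum>q\<in>S. ord q)"
      using fin \<open>0 \<in> S\<close> \<open>w \<noteq> 0\<close> by (simp add: sum.remove power_int_add)
    also have "\<dots> = w powi ord 0 * w ^ 4"
      using \<open>w \<noteq> 0\<close> deg by (simp add: power_int_one_over power_int_diff power_int_minus_divide)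
    finally show ?thesis by (simp add: mult_ac)
  qed
  also have "divisor_fun (S - {0}) ord w * w powi ord 0 = divisor_fun S ord w"
    using divisor_fun_remove[OF fin \<open>0 \<in> S\<close>] by simp
  finally show "cnj (divisor_fun S ord (1 / cnj w)) = K * divisor_fun S ord w * w ^ 4" .
qed

lemma reflection_factor_unimodular:
  fixes F :: "complex \<Rightarrow> complex"
  assumes fin: "finite S" and "0 \<in> S" and refl: "\<And>p. p \<in> S \<Longrightarrow> 1 / cnj p \<in> S"
    and nz: "\<And>w. w \<notin> S \<Longrightarrow> F w \<noteq> 0"
    and F_refl: "\<And>w. w \<notin> S \<Longrightarrow> cnj (F (1 / cnj w)) = K * F w * w ^ 4"
  shows "K * cnj K = 1"
proof -
  \<comment> \<open>apply the reflection identity at some w outside S and at its mirror image\<close>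
  obtain w where "w \<notin> S"
    using ex_new_if_finite[OF infinite_UNIV_char_0 fin] by blast
  define w' where "w' = 1 / cnj w"
  have "w' \<notin> S"
    using refl[of w'] \<open>w \<notin> S\<close> by (auto simp: w'_def)
  have "w \<noteq> 0" using \<open>w \<notin> S\<close> \<open>0 \<in> S\<close> by auto
  have F_w': "F w' = cnj K * cnj (F w) * cnj w ^ 4"
    using arg_cong[OF F_refl[OF \<open>w \<notin> S\<close>], of cnj] by (simp add: w'_def)
  have "cnj (F w) = K * F w' * w' ^ 4"
    using F_refl[OF \<open>w' \<notin> S\<close>] by (simp add: w'_def)
  also have "\<dots> = (K * cnj K) * cnj (F w) * (cnj w * w') ^ 4"
    unfolding F_w' by (simp only: mult_ac power_mult_distrib)
  also have "cnj w * w' = 1"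
    using \<open>w \<noteq> 0\<close> by (simp add: w'_def)
  finally show ?thesis
    using nz[OF \<open>w \<notin> S\<close>] by simp
qed

lemma unimodular_eq_quotient_cnj:
  fixes K :: complex
  assumes "K * cnj K = 1"
  obtains c where "c \<noteq> 0" "K = c / cnj c"
proof (cases "K = -1")
  case True
  then show ?thesis by (intro that[of \<i>]) auto
next
  case False
  define c where "c = 1 + K"
  have "c \<noteq> 0" using False by (auto simp: c_def add_eq_0_iff)
  moreover have "K * cnj c = c"
    using assms by (simp add: c_def algebra_simps)
  then have "K = c / cnj c"
    using \<open>c \<noteq> 0\<close> by (simp add: eq_divide_eq)
  ultimately show ?thesis by (rule that)
qed

lemma divisor_fun_reflection_symmetric:
  assumes fin: "finite S" and "0 \<in> S" and refl: "\<And>p. p \<in> S \<Longrightarrow> 1 / cnj p \<in> S"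
    and ord_refl: "\<And>p. p \<in> S \<Longrightarrow> ord (1 / cnj p) = ord p"
    and deg: "ord 0 = - (\<Sum>p\<in>S. ord p) - 4"
  obtains c where "c \<noteq> 0"
    "\<And>w. w \<notin> S \<Longrightarrow> c * divisor_fun S ord w = cnj (c * divisor_fun S ord (1 / cnj w)) / w ^ 4"
proof -
  obtain K
    where K: "\<And>w. w \<notin> S \<Longrightarrow> cnj (divisor_fun S ord (1 / cnj w)) = K * divisor_fun S ord w * w ^ 4"
    using divisor_fun_reflection[OF assms] by blast
  have "K * cnj K = 1"
    using fin \<open>0 \<in> S\<close> refl divisor_fun_nonzero[OF fin] K by (rule reflection_factor_unimodular)
  then obtain c where "c \<noteq> 0" "K = c / cnj c"
    by (rule unimodular_eq_quotient_cnj)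
  show ?thesis
  proof (rule that[OF \<open>c \<noteq> 0\<close>])
    fix w assume "w \<notin> S"
    then have "w \<noteq> 0" using \<open>0 \<in> S\<close> by auto
    then show "c * divisor_fun S ord w = cnj (c * divisor_fun S ord (1 / cnj w)) / w ^ 4"
      using K[OF \<open>w \<notin> S\<close>] \<open>K = c / cnj c\<close> \<open>c \<noteq> 0\<close> by (simp add: field_simps)
  qed
qed

section \<open>Residue of the square root at a pole of order four\<close>

lemma continuous_square_roots_differ_by_sign:
  fixes f g :: "'a::topological_space \<Rightarrow> 'b::real_normed_field"
  assumes "connected A" "continuous_on A f" "continuous_on A g"
    and sq: "\<And>w. w \<in> A \<Longrightarrow> f w ^ 2 = g w ^ 2" and nz: "\<And>w. w \<in> A \<Longrightarrow> g w \<noteq> 0"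
  obtains \<epsilon> where "\<epsilon> ^ 2 = 1" "\<And>w. w \<in> A \<Longrightarrow> f w = \<epsilon> * g w"
proof -
  have ratio_sq: "(f w / g w) ^ 2 = 1" if "w \<in> A" for w
    using sq[OF that] nz[OF that] by (simp add: power_divide)
  have "(\<lambda>w. f w / g w) constant_on A"
  proof (rule continuous_finite_range_constant[OF \<open>connected A\<close>])
    show "continuous_on A (\<lambda>w. f w / g w)"
      using assms(2,3) nz by (intro continuous_intros) auto
    have "(\<lambda>w. f w / g w) ` A \<subseteq> {1, -1}"
      using ratio_sq unfolding power2_eq_1_iff by blast
    then show "finite ((\<lambda>w. f w / g w) ` A)"
      by (rule finite_subset) simp
  qed
  then obtain \<epsilon> where \<epsilon>: "\<And>w. w \<in> A \<Longrightarrow> f w / g w = \<epsilon>"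
    by (auto simp: constant_on_def)
  show ?thesis
  proof (cases "A = {}")
    case True
    then show ?thesis by (intro that[of 1]) auto
  next
    case False
    then obtain a where "a \<in> A" by blast
    show ?thesis
    proof (rule that)
      show "\<epsilon> ^ 2 = 1" using ratio_sq[OF \<open>a \<in> A\<close>] \<epsilon>[OF \<open>a \<in> A\<close>] by simp
      show "f w = \<epsilon> * g w" if "w \<in> A" for w
        using \<epsilon>[OF that] nz[OF that] by (simp add: field_simps)
    qed
  qed
qed

lemma sqrt_residue_vanishes_iff_deriv_sqrt_eq_0:
  assumes "r > 0" and s_holo: "s holomorphic_on ball p r" and s_nz: "\<And>w. w \<in> ball p r \<Longrightarrow> s w \<noteq> 0"
    and Q_eq: "\<And>w. w \<in> ball p r - {p} \<Longrightarrow> Q w = (s w / (w - p) ^ 2) ^ 2"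
  shows "sqrt_residue_vanishes Q p \<longleftrightarrow> deriv s p = 0"
proof -
  define g where "g w = s w / (w - p) ^ 2" for w
  have res_g: "residue g p = deriv s p"
    using residue_holomorphic_over_power[OF open_ball _ s_holo, where n = 1] \<open>r > 0\<close>
    by (simp add: g_def[abs_def] power2_eq_square)
  have g_holo: "g holomorphic_on ball p r - {p}"
    unfolding g_def by (intro holomorphic_intros holomorphic_on_subset[OF s_holo]) auto
  show ?thesis
  proof
    assume "sqrt_residue_vanishes Q p"
    then obtain f r' where "r' > 0" and f_holo: "f holomorphic_on ball p r' - {p}"
      and f_sq: "\<forall>w\<in>ball p r' - {p}. f w ^ 2 = Q w" and "residue f p = 0"
      unfolding sqrt_residue_vanishes_def by blast
    \<comment> \<open>on the connected punctured disc, any square root of Q is \<open>\<plusminus>g\<close>\<close>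
    define A where "A = ball p (min r r') - {p}"
    obtain \<epsilon> where "\<epsilon> ^ 2 = 1" and f_eq: "\<And>w. w \<in> A \<Longrightarrow> f w = \<epsilon> * g w"
    proof (rule continuous_square_roots_differ_by_sign)
      show "connected A" unfolding A_def by (rule connected_punctured_ball) simp
      show "continuous_on A f" "continuous_on A g"
        unfolding A_def by (intro holomorphic_on_imp_continuous_on holomorphic_on_subset[OF f_holo]
            holomorphic_on_subset[OF g_holo]; auto)+
      show "f w ^ 2 = g w ^ 2" if "w \<in> A" for w
        using that f_sq Q_eq by (auto simp: A_def g_def)
      show "g w \<noteq> 0" if "w \<in> A" for w
        using that s_nz by (auto simp: A_def g_def)
    qed blast
    have "\<forall>\<^sub>F w in at p. w \<in> A"
      unfolding A_def using \<open>r > 0\<close> \<open>r' > 0\<close> by (intro eventually_at_in_open) auto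
    then have "residue f p = residue (\<lambda>w. \<epsilon> * g w) p"
      by (intro residue_cong) (auto elim!: eventually_mono simp: f_eq)
    also have "\<dots> = \<epsilon> * deriv s p"
      using residue_lmul[OF open_ball _ g_holo] \<open>r > 0\<close> res_g by simp
    finally show "deriv s p = 0"
      using \<open>residue f p = 0\<close> \<open>\<epsilon> ^ 2 = 1\<close> by auto
  next
    assume "deriv s p = 0"
    moreover have "\<forall>w\<in>ball p r - {p}. g w ^ 2 = Q w"
      using Q_eq by (simp add: g_def)
    ultimately show "sqrt_residue_vanishes Q p"
      unfolding sqrt_residue_vanishes_def using \<open>r > 0\<close> g_holo res_g by auto
  qed
qed

lemma sqrt_residue_vanishes_iff_deriv_eq_0:
  assumes h_ana: "h analytic_on {p}" and h_nz: "h p \<noteq> 0"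
    and Q_eq: "\<forall>\<^sub>F w in at p. Q w = h w / (w - p) ^ 4"
  shows "sqrt_residue_vanishes Q p \<longleftrightarrow> deriv h p = 0"
proof -
  obtain r1 where "r1 > 0" and h_holo: "h holomorphic_on ball p r1"
    using h_ana by (auto simp: analytic_on_def)
  have "\<forall>\<^sub>F w in at p. h w \<noteq> 0 \<and> Q w = h w / (w - p) ^ 4"
    using analytic_at_neq_imp_eventually_neq[OF h_ana h_nz] Q_eq by eventually_elim auto
  then obtain r2 where "r2 > 0"
    and r2: "\<And>w. w \<in> ball p r2 - {p} \<Longrightarrow> h w \<noteq> 0 \<and> Q w = h w / (w - p) ^ 4"
    by (auto simp: eventually_at dist_commute)
  define r where "r = min r1 r2"
  have "r > 0" using \<open>r1 > 0\<close> \<open>r2 > 0\<close> by (simp add: r_def)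
  have h_nz_ball: "h w \<noteq> 0" if "w \<in> ball p r" for w
    using r2[of w] h_nz that by (cases "w = p") (auto simp: r_def)
  have "h holomorphic_on ball p r"
    using h_holo by (rule holomorphic_on_subset) (auto simp: r_def)
  then obtain s where s_holo: "s holomorphic_on ball p r"
    and s_sq: "\<And>w. w \<in> ball p r \<Longrightarrow> h w = s w ^ 2"
    using contractible_imp_holomorphic_sqrt convex_imp_contractible[OF convex_ball] h_nz_ball
    by metis
  have "\<forall>\<^sub>F w in nhds p. w \<in> ball p r"
    using \<open>r > 0\<close> by (intro eventually_nhds_in_open) auto
  then have "deriv h p = deriv (\<lambda>w. s w ^ 2) p"
    by (intro deriv_cong_ev) (auto elim!: eventually_mono simp: s_sq)
  also have "\<dots> = 2 * deriv s p * s p"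
  proof (rule DERIV_imp_deriv)
    have "(s has_field_derivative deriv s p) (at p)"
      using \<open>r > 0\<close> by (intro holomorphic_derivI[OF s_holo]) auto
    then show "((\<lambda>w. s w ^ 2) has_field_derivative 2 * deriv s p * s p) (at p)"
      by (auto intro!: derivative_eq_intros)
  qed
  finally have "deriv h p = 0 \<longleftrightarrow> deriv s p = 0"
    using s_sq[of p] h_nz \<open>r > 0\<close> by auto
  moreover have "sqrt_residue_vanishes Q p \<longleftrightarrow> deriv s p = 0"
  proof (rule sqrt_residue_vanishes_iff_deriv_sqrt_eq_0[OF \<open>r > 0\<close> s_holo])
    show "s w \<noteq> 0" if "w \<in> ball p r" for w
      using that h_nz_ball s_sq by auto
    show "Q w = (s w / (w - p) ^ 2) ^ 2" if "w \<in> ball p r - {p}" for w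
      using that r2[of w] s_sq[of w] by (auto simp: r_def power_divide simp flip: power_mult)
  qed
  ultimately show ?thesis by simp
qed

section \<open>Meromorphic functions on the Riemann sphere\<close>

lemma frequently_at_infinity_chart_nonzero:
  assumes "\<forall>\<^sub>\<approx>w\<in>UNIV. Q w \<noteq> 0"
  shows "\<exists>\<^sub>F u in at 0. at_infinity_chart Q u \<noteq> 0"
proof -
  have "\<exists>\<^sub>F v in at_infinity. Q v \<noteq> 0 \<and> v \<noteq> 0"
  proof (rule ccontr)
    assume "\<not> (\<exists>\<^sub>F v in at_infinity. Q v \<noteq> 0 \<and> v \<noteq> 0)"
    then obtain B where B: "\<And>v. B \<le> norm v \<Longrightarrow> Q v = 0 \<or> v = 0"
      by (auto simp: not_frequently eventually_at_infinity)
    define v0 where "v0 = complex_of_real (\<bar>B\<bar> + 1)"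
    have "((\<lambda>v. norm v) \<longlongrightarrow> norm v0) (at v0)"
      by (intro tendsto_intros)
    then have "\<forall>\<^sub>F v in at v0. \<bar>B\<bar> < norm v"
      by (rule order_tendstoD) (simp add: v0_def)
    moreover have "\<forall>\<^sub>F v in at v0. Q v \<noteq> 0"
      using assms by (rule eventually_cosparse_imp_eventually_at) auto
    ultimately have "\<forall>\<^sub>F v in at v0. False"
    proof eventually_elim
      case (elim v)
      then have "B \<le> norm v" "v \<noteq> 0" by auto
      with B elim(2) show False by blast
    qed
    then show False by simp
  qed
  then have "\<exists>\<^sub>F v in at_infinity. at_infinity_chart Q (inverse v) \<noteq> 0"
    by (rule frequently_elim1) (simp add: at_infinity_chart_def field_simps)
  then show ?thesis
    by (simp add: at_to_infinity frequently_filtermap)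
qed

lemma remove_sings_entire_if_no_poles:
  assumes "F meromorphic_on UNIV" and "\<And>w. \<not> is_pole F w"
  shows "remove_sings F holomorphic_on UNIV"
proof -
  have "remove_sings F analytic_on {w}" for w
  proof -
    have "F meromorphic_on {w}"
      using assms(1) by (rule meromorphic_on_subset) auto
    then show ?thesis
      using assms(2)[of w]
      by (auto simp: meromorphic_at_iff not_essential_def intro: remove_sings_analytic_at)
  qed
  then show ?thesis
    by (meson analytic_imp_holomorphic analytic_on_analytic_at UNIV_I)
qed

lemma meromorphic_without_poles_on_sphere_imp_constant:
  assumes mero: "F meromorphic_on UNIV" and mero_inf: "(\<lambda>u. F (1 / u)) meromorphic_on {0}"
    and no_pole: "\<And>w. \<not> is_pole F w" and no_pole_inf: "\<not> is_pole (\<lambda>u. F (1 / u)) 0"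
  obtains c where "\<And>p. \<forall>\<^sub>F w in at p. F w = c"
proof -
  define G where "G = remove_sings F"
  obtain c where "(\<lambda>u. F (1 / u)) \<midarrow>0\<rightarrow> c"
    using mero_inf no_pole_inf by (auto simp: meromorphic_at_iff not_essential_def)
  then have F_lim: "(F \<longlongrightarrow> c) at_infinity"
    by (rule lim_zero_infinity)
  obtain r where "r > 0" and r: "(\<lambda>u. F (1 / u)) analytic_on ball 0 r - {0}"
    using mero_inf by (auto simp: meromorphic_at_iff isolated_singularity_at_def)
  \<comment> \<open>since \<open>F v = F (1 / (1 / v))\<close>, F is analytic near infinity and agrees with G there\<close>
  have "G v = F v" if "1 / r < norm v" for v
  proof -
    have "0 < norm v" using that \<open>r > 0\<close> by (smt (verit) divide_pos_pos)
    then have "v \<noteq> 0" "norm (1 / v) < r"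
      using that \<open>r > 0\<close> by (auto simp: norm_divide field_simps)
    then have "(\<lambda>u. F (1 / u)) analytic_on (\<lambda>v. 1 / v) ` {v}"
      by (intro analytic_on_subset[OF r]) auto
    then have "((\<lambda>u. F (1 / u)) \<circ> (\<lambda>v. 1 / v)) analytic_on {v}"
      using \<open>v \<noteq> 0\<close> by (intro analytic_on_compose) (auto intro!: analytic_intros)
    then show ?thesis by (simp add: G_def o_def remove_sings_at_analytic)
  qed
  then have "\<forall>\<^sub>F v in at_infinity. G v = F v"
    unfolding eventually_at_infinity by (intro exI[of _ "1 / r + 1"]) auto
  with F_lim have "(G \<longlongrightarrow> c) at_infinity"
    by (simp add: tendsto_cong)
  then have "((\<lambda>w. G w - c) \<longlongrightarrow> 0) at_infinity"
    using tendsto_diff[OF _ tendsto_const[of c]] by fastforce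
  moreover have "(\<lambda>w. G w - c) holomorphic_on UNIV"
    unfolding G_def by (intro holomorphic_intros remove_sings_entire_if_no_poles mero no_pole)
  ultimately have G_const: "G w - c = 0" for w
    by (rule Liouville_weak_0[rotated])
  show ?thesis
  proof (rule that)
    fix p
    have "\<forall>\<^sub>F w in at p. G w = F w"
      unfolding G_def using mero
      by (intro eventually_remove_sings_eq_at meromorphic_on_isolated_singularity)
        (rule meromorphic_on_subset, auto)
    then show "\<forall>\<^sub>F w in at p. F w = c"
      by (rule eventually_mono) (use G_const in \<open>simp add: right_minus_eq\<close>)
  qed
qed

lemma quotient_no_pole_if_same_zorder:
  assumes "Q meromorphic_on {p}" "R meromorphic_on {p}"
    and "\<exists>\<^sub>F w in at p. Q w \<noteq> 0" "\<exists>\<^sub>F w in at p. R w \<noteq> 0" and "zorder Q p = zorder R p"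
  shows "\<not> is_pole (\<lambda>w. Q w / R w) p"
proof
  assume "is_pole (\<lambda>w. Q w / R w) p"
  moreover have "isolated_singularity_at (\<lambda>w. Q w / R w) p"
    using assms by (intro meromorphic_on_isolated_singularity meromorphic_intros)
  ultimately have "zorder (\<lambda>w. Q w / R w) p < 0"
    by (rule isolated_pole_imp_neg_zorder[rotated])
  moreover have "zorder (\<lambda>w. Q w / R w) p = zorder Q p - zorder R p"
    using assms by (intro zorder_divide)
  ultimately show False
    using assms by simp
qed

lemma same_zorders_imp_const_multiple:
  fixes Q R :: "complex \<Rightarrow> complex"
  assumes Q_mero: "Q meromorphic_on UNIV" and R_mero: "R meromorphic_on UNIV"
    and Q_mero_inf: "at_infinity_chart Q meromorphic_on {0}"
    and R_mero_inf: "at_infinity_chart R meromorphic_on {0}"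
    and Q_nz: "\<forall>\<^sub>\<approx>w\<in>UNIV. Q w \<noteq> 0" and R_nz: "\<forall>\<^sub>\<approx>w\<in>UNIV. R w \<noteq> 0"
    and same_zorder: "\<And>w. zorder Q w = zorder R w"
    and same_zorder_inf: "zorder (at_infinity_chart Q) 0 = zorder (at_infinity_chart R) 0"
  obtains c where "c \<noteq> 0" "\<And>p. \<forall>\<^sub>F w in at p. Q w = c * R w"
proof -
  define F where "F w = Q w / R w" for w
  have Q_nz_at: "\<forall>\<^sub>F w in at p. Q w \<noteq> 0" and R_nz_at: "\<forall>\<^sub>F w in at p. R w \<noteq> 0" for p
    using Q_nz R_nz by (auto intro: eventually_cosparse_imp_eventually_at)
  have no_pole: "\<not> is_pole F p" for p
    unfolding F_def using Q_mero R_mero Q_nz_at R_nz_at same_zorder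
    by (intro quotient_no_pole_if_same_zorder eventually_frequently)
      (auto intro: meromorphic_on_subset)
  define C where "C u = at_infinity_chart Q u / at_infinity_chart R u" for u
  have F_inf: "\<forall>\<^sub>F u in at 0. F (1 / u) = C u"
    using eventually_neq_at_within[of 0 0 UNIV]
    by eventually_elim (simp add: F_def C_def at_infinity_chart_def)
  have "\<not> is_pole C 0"
    unfolding C_def using Q_mero_inf R_mero_inf same_zorder_inf
    by (intro quotient_no_pole_if_same_zorder frequently_at_infinity_chart_nonzero Q_nz R_nz)
  then have no_pole_inf: "\<not> is_pole (\<lambda>u. F (1 / u)) 0"
    using F_inf by (subst is_pole_cong) auto
  have "C meromorphic_on {0}"
    unfolding C_def by (intro meromorphic_intros Q_mero_inf R_mero_inf)
  then have mero_inf: "(\<lambda>u. F (1 / u)) meromorphic_on {0}"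
    using F_inf by (subst meromorphic_on_cong) auto
  have "F meromorphic_on UNIV"
    unfolding F_def by (intro meromorphic_intros Q_mero R_mero)
  then obtain c where c: "\<And>p. \<forall>\<^sub>F w in at p. F w = c"
    using meromorphic_without_poles_on_sphere_imp_constant mero_inf no_pole no_pole_inf by blast
  show ?thesis
  proof (rule that)
    have "\<forall>\<^sub>F w in at 0. c = F w \<and> F w \<noteq> 0"
      using c[of 0] Q_nz_at[of 0] R_nz_at[of 0] by eventually_elim (auto simp: F_def)
    then show "c \<noteq> 0"
      by (auto dest: eventually_happens)
    show "\<forall>\<^sub>F w in at p. Q w = c * R w" for p
      using c[of p] R_nz_at[of p] by eventually_elim (auto simp: F_def field_simps)
  qed
qed

lemma is_pole_reflection:
  fixes Q :: "complex \<Rightarrow> complex"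
  assumes sym: "\<forall>\<^sub>\<approx>w\<in>UNIV. Q w = cnj (Q (1 / cnj w)) / w ^ 4"
    and pole: "is_pole Q p" and "p \<noteq> 0"
  shows "is_pole Q (1 / cnj p)"
proof -
  define p' where "p' = 1 / cnj p"
  have "p' \<noteq> 0" using \<open>p \<noteq> 0\<close> by (simp add: p'_def)
  have "filterlim (\<lambda>w. 1 / cnj w) (at p) (at p')"
  proof (rule filterlim_atI)
    show "((\<lambda>w. 1 / cnj w) \<longlongrightarrow> p) (at p')"
      using \<open>p' \<noteq> 0\<close> by (auto intro!: tendsto_eq_intros simp: p'_def)
    have "\<forall>\<^sub>F w in at p'. w \<noteq> p'" by (rule eventually_neq_at_within)
    then show "\<forall>\<^sub>F w in at p'. 1 / cnj w \<noteq> p"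
      by (rule eventually_mono) (auto simp: p'_def)
  qed
  with pole have "filterlim (\<lambda>w. Q (1 / cnj w)) at_infinity (at p')"
    unfolding is_pole_def by (rule filterlim_compose)
  then have "filterlim (\<lambda>w. cnj (Q (1 / cnj w))) at_infinity (at p')"
    by (simp add: filterlim_at_infinity_conv_norm_at_top)
  then have "filterlim (\<lambda>w. 1 / w ^ 4 * cnj (Q (1 / cnj w))) at_infinity (at p')"
    using \<open>p' \<noteq> 0\<close>
    by (intro tendsto_mult_filterlim_at_infinity[of _ "1 / p' ^ 4"] tendsto_intros) auto
  then have "is_pole (\<lambda>w. cnj (Q (1 / cnj w)) / w ^ 4) p'"
    by (simp add: is_pole_def mult.commute)
  moreover have "\<forall>\<^sub>F w in at p'. Q w = cnj (Q (1 / cnj w)) / w ^ 4"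
    using sym by (rule eventually_cosparse_imp_eventually_at) simp
  ultimately show ?thesis
    unfolding p'_def[symmetric] by (simp add: is_pole_cong)
qed

lemma poles_reflection_invariant:
  fixes Q :: "complex \<Rightarrow> complex"
  assumes mero: "Q meromorphic_on UNIV" and nz: "\<forall>\<^sub>\<approx>w\<in>UNIV. Q w \<noteq> 0"
    and sym: "\<forall>\<^sub>\<approx>w\<in>UNIV. Q w = cnj (Q (1 / cnj w)) / w ^ 4"
    and poles: "{w. w \<noteq> 0 \<and> zorder Q w < 0} = P"
  shows "(\<lambda>w. 1 / cnj w) ` P = P"
proof -
  have mero_at: "Q meromorphic_on {w}" for w
    using mero by (rule meromorphic_on_subset) auto
  have P_refl: "1 / cnj p \<in> P" if "p \<in> P" for p
  proof -
    have "p \<noteq> 0" "zorder Q p < 0" using that poles by auto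
    then have "is_pole Q p"
      using mero_at nz
      by (intro zorder_neg_imp_is_pole) (auto intro: eventually_cosparse_imp_eventually_at)
    then have "is_pole Q (1 / cnj p)"
      using sym \<open>p \<noteq> 0\<close> by (intro is_pole_reflection)
    then have "zorder Q (1 / cnj p) < 0"
      by (intro isolated_pole_imp_neg_zorder meromorphic_on_isolated_singularity mero_at)
    then show ?thesis
      using poles \<open>p \<noteq> 0\<close> by auto
  qed
  show ?thesis
  proof (intro equalityI subsetI)
    fix p assume "p \<in> P"
    then show "p \<in> (\<lambda>w. 1 / cnj w) ` P"
      using P_refl[of p] by (intro image_eqI[of _ _ "1 / cnj p"]) auto
  qed (use P_refl in auto)
qed

lemma QD_with_nonzero:
  assumes "QD_with m n z xi Q"
  shows "\<forall>\<^sub>\<approx>w\<in>UNIV. Q w \<noteq> 0"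
proof -
  have "Q meromorphic_on UNIV" "\<not> (\<forall>\<^sub>\<approx>w\<in>UNIV. Q w = 0)"
    using assms by (auto simp: QD_with_def)
  then show ?thesis
    using meromorphic_imp_constant_or_avoid[of Q UNIV] by auto
qed

lemma QD_with_poles:
  assumes "QD_with m n z xi Q"
  shows "{w. w \<noteq> 0 \<and> zorder Q w < 0} = xi ` {..<m}"
proof (intro equalityI subsetI)
  fix w assume "w \<in> {w. w \<noteq> 0 \<and> zorder Q w < 0}"
  then show "w \<in> xi ` {..<m}"
    using assms by (cases "w \<in> z ` {..<n}") (auto simp: QD_with_def)
qed (use assms in \<open>auto simp: QD_with_def\<close>)

section \<open>The configuration of zeros and poles\<close>

locale qd_configuration =
  fixes m n :: nat and z xi :: "nat \<Rightarrow> complex"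
  assumes z_circle: "\<forall>j<n. norm (z j) = 1"
    and z_inj: "inj_on z {..<n}"
    and xi_nonzero: "\<forall>k<m. xi k \<noteq> 0"
    and xi_inj: "inj_on xi {..<m}"
    and xi_not_z: "\<forall>k<m. \<forall>j<n. xi k \<noteq> z j"
begin

abbreviation Z :: "complex set" where "Z \<equiv> z ` {..<n}"
abbreviation Xi :: "complex set" where "Xi \<equiv> xi ` {..<m}"

definition points :: "complex set" where
  "points = insert 0 (Z \<union> Xi)"

definition divisor_ord :: "complex \<Rightarrow> int" where
  "divisor_ord p = (if p = 0 then - (int n + 2 - 2 * int m) else if p \<in> Z then 2 else -4)"

definition Q_model :: "complex \<Rightarrow> complex" where
  "Q_model = divisor_fun points divisor_ord"

definition stationary_lhs :: "nat \<Rightarrow> complex" where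
  "stationary_lhs k = - (\<Sum>j<n. 2 / (xi k - z j)) + (\<Sum>l\<in>{..<m} - {k}. 4 / (xi k - xi l))
                      + of_int (int n - 2 * int m + 2) / xi k"

lemma finite_points [simp]: "finite points"
  by (simp add: points_def)

lemma zero_notin_Z: "0 \<notin> Z"
  using z_circle by force

lemma zero_notin_Xi: "0 \<notin> Xi"
  using xi_nonzero by force

lemma Z_Xi_disjoint: "Z \<inter> Xi = {}"
  using xi_not_z by force

lemma divisor_ord_z: "j < n \<Longrightarrow> divisor_ord (z j) = 2"
  using zero_notin_Z by (force simp: divisor_ord_def)

lemma divisor_ord_xi: "k < m \<Longrightarrow> divisor_ord (xi k) = -4"
  using zero_notin_Xi Z_Xi_disjoint by (force simp: divisor_ord_def)

lemma zorder_Q_model: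
  "zorder Q_model w = (if w = 0 then - (int n + 2 - 2 * int m) else if w \<in> Z then 2
                       else if w \<in> Xi then -4 else 0)"
  using Z_Xi_disjoint by (auto simp: Q_model_def zorder_divisor_fun points_def divisor_ord_def)

lemma sum_divisor_ord: "(\<Sum>p\<in>points. divisor_ord p) = int n - 2 * int m - 2"
proof -
  have "(\<Sum>p\<in>points. divisor_ord p) = divisor_ord 0 + (\<Sum>p\<in>Z. divisor_ord p) + (\<Sum>p\<in>Xi. divisor_ord p)"
    using zero_notin_Z zero_notin_Xi Z_Xi_disjoint by (simp add: points_def sum.union_disjoint)
  also have "(\<Sum>p\<in>Z. divisor_ord p) = (\<Sum>p\<in>Z. 2)"
    using zero_notin_Z by (intro sum.cong) (auto simp: divisor_ord_def)
  also have "(\<Sum>p\<in>Xi. divisor_ord p) = (\<Sum>p\<in>Xi. -4)"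
    using zero_notin_Xi Z_Xi_disjoint by (intro sum.cong) (auto simp: divisor_ord_def)
  also have "(\<Sum>p\<in>Z. 2) = 2 * int n"
    using card_image[OF z_inj] by simp
  also have "(\<Sum>p\<in>Xi. -4) = - 4 * int m"
    using card_image[OF xi_inj] by simp
  finally show ?thesis by (simp add: divisor_ord_def)
qed

lemma zorder_at_infinity_chart_Q_model:
  "zorder (at_infinity_chart Q_model) 0 = - (int n + 2 - 2 * int m)"
  by (simp add: Q_model_def zorder_at_infinity_chart_divisor_fun sum_divisor_ord)

lemma log_deriv_at_xi:
  assumes "k < m"
  shows "(\<Sum>q\<in>points - {xi k}. of_int (divisor_ord q) / (xi k - q)) = - stationary_lhs k"
proof -
  have "xi k \<noteq> 0" "xi k \<notin> Z" using assms zero_notin_Xi Z_Xi_disjoint by auto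
  then have "points - {xi k} = insert 0 (Z \<union> xi ` ({..<m} - {k}))"
    using assms xi_inj by (auto simp: points_def inj_on_image_set_diff)
  moreover have "0 \<notin> Z \<union> xi ` ({..<m} - {k})" and "Z \<inter> xi ` ({..<m} - {k}) = {}"
    using zero_notin_Z zero_notin_Xi Z_Xi_disjoint by auto
  ultimately have "(\<Sum>q\<in>points - {xi k}. of_int (divisor_ord q) / (xi k - q))
      = of_int (divisor_ord 0) / xi k + (\<Sum>q\<in>Z. of_int (divisor_ord q) / (xi k - q))
        + (\<Sum>q\<in>xi ` ({..<m} - {k}). of_int (divisor_ord q) / (xi k - q))"
    by (simp add: sum.union_disjoint add.assoc)
  also have "(\<Sum>q\<in>Z. of_int (divisor_ord q) / (xi k - q)) = (\<Sum>j<n. 2 / (xi k - z j))"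
    by (simp add: sum.reindex[OF z_inj] divisor_ord_z)
  also have "(\<Sum>q\<in>xi ` ({..<m} - {k}). of_int (divisor_ord q) / (xi k - q))
      = - (\<Sum>l\<in>{..<m} - {k}. 4 / (xi k - xi l))"
    by (simp add: sum.reindex[OF inj_on_subset[OF xi_inj]] divisor_ord_xi flip: sum_negf)
  also have "of_int (divisor_ord 0) / xi k = - (of_int (int n - 2 * int m + 2) / xi k)"
    using \<open>xi k \<noteq> 0\<close> by (simp add: divisor_ord_def field_simps)
  finally show ?thesis
    by (simp add: stationary_lhs_def)
qed

lemma sqrt_residue_vanishes_iff_stationary:
  assumes "k < m" "c \<noteq> 0" and Q_eq: "\<forall>\<^sub>F w in at (xi k). Q w = c * Q_model w"
  shows "sqrt_residue_vanishes Q (xi k) \<longleftrightarrow> stationary_lhs k = 0"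
proof -
  define p where "p = xi k"
  define h where "h w = c * divisor_fun (points - {p}) divisor_ord w" for w
  have "p \<in> points" by (simp add: p_def points_def \<open>k < m\<close>)
  have "h holomorphic_on - (points - {p})"
    unfolding h_def by (intro holomorphic_intros divisor_fun_holomorphic) auto
  moreover have "open (- (points - {p}))"
    by (intro open_Compl finite_imp_closed) auto
  ultimately have "h analytic_on {p}"
    by (simp add: analytic_on_open[symmetric] analytic_on_subset)
  moreover have "divisor_fun (points - {p}) divisor_ord p \<noteq> 0"
    by (intro divisor_fun_nonzero) auto
  then have "h p \<noteq> 0"
    using \<open>c \<noteq> 0\<close> by (simp add: h_def)
  moreover have "\<forall>\<^sub>F w in at p. Q w = h w / (w - p) ^ 4"
    using Q_eq unfolding p_def[symmetric]
    by (rule eventually_mono) (simp add: Q_model_def h_def divisor_fun_remove[OF _ \<open>p \<in> points\<close>]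
        divisor_ord_xi[OF \<open>k < m\<close>, folded p_def] power_int_minus_divide)
  ultimately have "sqrt_residue_vanishes Q p \<longleftrightarrow> deriv h p = 0"
    by (rule sqrt_residue_vanishes_iff_deriv_eq_0)
  also have "deriv h p = c * (divisor_fun (points - {p}) divisor_ord p
                              * (\<Sum>q\<in>points - {p}. of_int (divisor_ord q) / (p - q)))"
    unfolding h_def by (intro DERIV_imp_deriv DERIV_cmult divisor_fun_has_field_derivative) auto
  also have "(\<Sum>q\<in>points - {p}. of_int (divisor_ord q) / (p - q)) = - stationary_lhs k"
    unfolding p_def by (rule log_deriv_at_xi[OF \<open>k < m\<close>])
  finally show ?thesis
    using \<open>c \<noteq> 0\<close> \<open>divisor_fun (points - {p}) divisor_ord p \<noteq> 0\<close> by (simp add: p_def)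
qed

lemma Z_reflection_fixed: "p \<in> Z \<Longrightarrow> 1 / cnj p = p"
  using z_circle complex_norm_square[of p] by (auto simp: divide_eq_eq mult.commute)

lemma Q_model_nonzero: "\<forall>\<^sub>\<approx>w\<in>UNIV. Q_model w \<noteq> 0"
proof -
  have "\<forall>\<^sub>\<approx>w\<in>UNIV. w \<notin> points"
    by (intro eventually_not_in_cosparse finite_imp_sparse) auto
  then show ?thesis
    by eventually_elim (simp add: Q_model_def divisor_fun_nonzero)
qed

lemma Q_model_reflection_symmetric:
  assumes Xi_refl: "(\<lambda>w. 1 / cnj w) ` Xi = Xi"
  obtains c where "c \<noteq> 0" "\<And>w. w \<notin> points \<Longrightarrow> c * Q_model w = cnj (c * Q_model (1 / cnj w)) / w ^ 4"
proof -
  have points_refl: "1 / cnj p \<in> points" if "p \<in> points" for p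
    using that Xi_refl Z_reflection_fixed by (auto simp: points_def)
  have ord_refl: "divisor_ord (1 / cnj p) = divisor_ord p" if "p \<in> points" for p
  proof -
    have "1 / cnj p \<in> Xi" if "p \<in> Xi" using that Xi_refl by blast
    then show ?thesis
      using \<open>p \<in> points\<close> zero_notin_Xi Z_Xi_disjoint Z_reflection_fixed
      by (auto simp: points_def divisor_ord_def)
  qed
  have "0 \<in> points" by (simp add: points_def)
  have deg: "divisor_ord 0 = - (\<Sum>p\<in>points. divisor_ord p) - 4"
    by (simp add: sum_divisor_ord divisor_ord_def[of 0])
  show ?thesis
    using divisor_fun_reflection_symmetric[OF finite_points \<open>0 \<in> points\<close> points_refl ord_refl deg]
      that
    unfolding Q_model_def by blast
qed

lemma exists_QD_if_stationary:
  assumes Xi_refl: "(\<lambda>w. 1 / cnj w) ` Xi = Xi" and stationary: "\<forall>k<m. stationary_lhs k = 0"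
  shows "\<exists>Q\<in>QD m n z. {w. w \<noteq> 0 \<and> zorder Q w < 0} = Xi \<and> {w. w \<noteq> 0 \<and> zorder Q w > 0} = Z"
proof -
  obtain c where "c \<noteq> 0"
    and c_sym: "\<And>w. w \<notin> points \<Longrightarrow> c * Q_model w = cnj (c * Q_model (1 / cnj w)) / w ^ 4"
    using Q_model_reflection_symmetric[OF Xi_refl] by blast
  define Q where "Q w = c * Q_model w" for w
  have zorder_Q: "zorder Q w = zorder Q_model w" for w
    unfolding Q_def by (rule zorder_cmult[OF \<open>c \<noteq> 0\<close>])
  have "QD_with m n z xi Q"
    unfolding QD_with_def
  proof (intro conjI allI impI)
    show "Q meromorphic_on UNIV"
      unfolding Q_def Q_model_def by (intro meromorphic_intros divisor_fun_meromorphic)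
    show "at_infinity_chart Q meromorphic_on {0}"
      unfolding Q_def Q_model_def at_infinity_chart_def divisor_fun_def
      by (intro meromorphic_intros)
    show "\<not> (\<forall>\<^sub>\<approx>w\<in>UNIV. Q w = 0)"
    proof
      assume "\<forall>\<^sub>\<approx>w\<in>UNIV. Q w = 0"
      with Q_model_nonzero have "\<forall>\<^sub>\<approx>w::complex\<in>UNIV. False"
        by eventually_elim (use \<open>c \<noteq> 0\<close> in \<open>simp add: Q_def\<close>)
      then show False by simp
    qed
    have "\<forall>\<^sub>\<approx>w\<in>UNIV. w \<notin> points"
      by (intro eventually_not_in_cosparse finite_imp_sparse) auto
    then show "\<forall>\<^sub>\<approx>w\<in>UNIV. Q w = cnj (Q (1 / cnj w)) / w ^ 4"
      by eventually_elim (simp add: Q_def c_sym)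
    have "at_infinity_chart Q = (\<lambda>w. c * at_infinity_chart Q_model w)"
      by (simp add: fun_eq_iff Q_def at_infinity_chart_def)
    then show "zorder (at_infinity_chart Q) 0 = - (int n + 2 - 2 * int m)"
      by (simp add: zorder_cmult[OF \<open>c \<noteq> 0\<close>] zorder_at_infinity_chart_Q_model)
    fix k assume "k < m"
    then show "xi k \<noteq> 0" using xi_nonzero by blast
    show "zorder Q (xi k) = -4"
      using \<open>k < m\<close> zero_notin_Xi Z_Xi_disjoint by (auto simp: zorder_Q zorder_Q_model)
    show "sqrt_residue_vanishes Q (xi k)"
      using sqrt_residue_vanishes_iff_stationary[OF \<open>k < m\<close> \<open>c \<noteq> 0\<close>] stationary \<open>k < m\<close>
      by (simp add: Q_def)
  qed (use zero_notin_Z in \<open>auto simp: zorder_Q zorder_Q_model\<close>)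
  moreover have "{w. w \<noteq> 0 \<and> zorder Q w < 0} = Xi" and "{w. w \<noteq> 0 \<and> zorder Q w > 0} = Z"
    using zero_notin_Z zero_notin_Xi Z_Xi_disjoint by (auto simp: zorder_Q zorder_Q_model)
  ultimately show ?thesis
    using xi_inj unfolding QD_def by blast
qed

lemma stationary_if_QD:
  assumes "Q \<in> QD m n z" and poles: "{w. w \<noteq> 0 \<and> zorder Q w < 0} = Xi"
  shows "(\<lambda>w. 1 / cnj w) ` Xi = Xi \<and> (\<forall>k<m. stationary_lhs k = 0)"
proof -
  obtain xi' where QD: "QD_with m n z xi' Q"
    using \<open>Q \<in> QD m n z\<close> by (auto simp: QD_def)
  then have xi'_Xi: "xi' ` {..<m} = Xi"
    using QD_with_poles poles by blast
  have Q_nz: "\<forall>\<^sub>\<approx>w\<in>UNIV. Q w \<noteq> 0"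
    using QD by (rule QD_with_nonzero)
  have Q_mero: "Q meromorphic_on UNIV" and Q_mero_inf: "at_infinity_chart Q meromorphic_on {0}"
    and Q_sym: "\<forall>\<^sub>\<approx>w\<in>UNIV. Q w = cnj (Q (1 / cnj w)) / w ^ 4"
    and xi': "\<And>k. k < m \<Longrightarrow> xi' k \<noteq> 0 \<and> zorder Q (xi' k) = -4 \<and> sqrt_residue_vanishes Q (xi' k)"
    and zorder_inf: "zorder (at_infinity_chart Q) 0 = - (int n + 2 - 2 * int m)"
    using QD unfolding QD_with_def by blast+
  have zorder_Q: "zorder Q w = zorder Q_model w" for w
    using QD xi' Z_Xi_disjoint zero_notin_Z
    by (auto simp: QD_with_def zorder_Q_model xi'_Xi[symmetric])
  obtain c where "c \<noteq> 0" and Q_eq: "\<And>p. \<forall>\<^sub>F w in at p. Q w = c * Q_model w"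
  proof (rule same_zorders_imp_const_multiple
      [OF Q_mero _ Q_mero_inf _ Q_nz Q_model_nonzero zorder_Q])
    show "Q_model meromorphic_on UNIV" "at_infinity_chart Q_model meromorphic_on {0}"
      unfolding Q_model_def
      by (rule divisor_fun_meromorphic at_infinity_chart_divisor_fun_meromorphic)+
    show "zorder (at_infinity_chart Q) 0 = zorder (at_infinity_chart Q_model) 0"
      by (simp add: zorder_inf zorder_at_infinity_chart_Q_model)
  qed blast
  have "stationary_lhs k = 0" if "k < m" for k
  proof -
    have "xi k \<in> xi' ` {..<m}"
      using \<open>k < m\<close> xi'_Xi by auto
    then have "sqrt_residue_vanishes Q (xi k)"
      using xi' by auto
    then show ?thesis
      using sqrt_residue_vanishes_iff_stationary[OF \<open>k < m\<close> \<open>c \<noteq> 0\<close> Q_eq] by simp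
  qed
  then show ?thesis
    using poles_reflection_invariant[OF Q_mero Q_nz Q_sym poles] by blast
qed

theorem stationary_iff_exists_QD:
  "(\<lambda>w. 1 / cnj w) ` Xi = Xi \<and> (\<forall>k<m. stationary_lhs k = 0) \<longleftrightarrow>
   (\<exists>Q\<in>QD m n z. {w. w \<noteq> 0 \<and> zorder Q w < 0} = Xi \<and> {w. w \<noteq> 0 \<and> zorder Q w > 0} = Z)"
proof
  assume "(\<lambda>w. 1 / cnj w) ` Xi = Xi \<and> (\<forall>k<m. stationary_lhs k = 0)"
  then show "\<exists>Q\<in>QD m n z. {w. w \<noteq> 0 \<and> zorder Q w < 0} = Xi \<and> {w. w \<noteq> 0 \<and> zorder Q w > 0} = Z"
    by (intro exists_QD_if_stationary) auto
next
  assume "\<exists>Q\<in>QD m n z. {w. w \<noteq> 0 \<and> zorder Q w < 0} = Xi \<and> {w. w \<noteq> 0 \<and> zorder Q w > 0} = Z"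
  then obtain Q where "Q \<in> QD m n z" "{w. w \<noteq> 0 \<and> zorder Q w < 0} = Xi"
    by blast
  then show "(\<lambda>w. 1 / cnj w) ` Xi = Xi \<and> (\<forall>k<m. stationary_lhs k = 0)"
    by (rule stationary_if_QD)
qed

end

theorem mainTheorem4:
  fixes m n :: nat and z xi :: "nat \<Rightarrow> complex"
  assumes z_circle: "\<forall>j<n. norm (z j) = 1"
    and z_inj: "inj_on z {..<n}"
    and xi_nonzero: "\<forall>k<m. xi k \<noteq> 0"
    and xi_inj: "inj_on xi {..<m}"
    and xi_not_z: "\<forall>k<m. \<forall>j<n. xi k \<noteq> z j"
  shows "((\<lambda>w. 1 / cnj w) ` xi ` {..<m} = xi ` {..<m} \<and>
          (\<forall>k<m. - (\<Sum>j<n. 2 / (xi k - z j))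
                  + (\<Sum>l\<in>{..<m} - {k}. 4 / (xi k - xi l))
                  + of_int (int n - 2 * int m + 2) / xi k = 0))
     \<longleftrightarrow>
         (\<exists>Q \<in> QD m n z.
            {w. w \<noteq> 0 \<and> zorder Q w < 0} = xi ` {..<m} \<and>
            {w. w \<noteq> 0 \<and> zorder Q w > 0} = z ` {..<n})"
proof -
  interpret qd_configuration m n z xi
    using assms by unfold_locales
  show ?thesis
    using stationary_iff_exists_QD unfolding stationary_lhs_def .
qed

end
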